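(* Assume product-form weights $w^t_i=u(i)v(m_t)$. Let $x_{1:n}\in\mathcal X^n$ and let $2\le t\le n-1$ be such that $x_t\in\mathcal A_{t-1}$ (an old symbol) and $x_{t+1}\notin\mathcal A_t$ (a new symbol). Let $x'_{1:n}$ be the sequence obtained from $x_{1:n}$ by swapping $x_t$ and $x_{t+1}$. Then $R^{\vec\beta^*}_S(x'_{1:n}) > R^{\vec\beta^*}_S(x_{1:n})$. Consequently, among all orderings of a fixed multiset of symbols, the redundancy $R^{\vec\beta^*}_S$ is maximized by an ordering in which all $m$ distinct symbols appear in the first $m$ positions.
   Context: Let $\mathcal X$ be a finite base alphabet. For $x_{1:n}\in\mathcal X^n$, let $n_i$ be the number of occurrences of $i$, $\mathcal A=\{x_1,\dots,x_n\}$, $m=|\mathcal A|$; for $0\le t\le n$, $\mathcal A_t=\{x_1,\dots,x_t\}$ ($\mathcal A_0=\emptyset$), $m_t=|\mathcal A_t|$, $n^t_i$ the count of $i$ in $x_{1:t}$. Product-form weights: $u:\mathcal X\to(0,\infty)$, $v:\{0,1,\dots\}\to(0,\infty)$ with $w^t_i:=u(i)v(m_t)$ and $\sum_{k\in\mathcal X\setminus\mathcal A_t}w^t_k\le1$. Adaptive model: $\beta^*_t:=m_t/\ln\frac{t+1}{m_t}$ for $t\ge1$, $\beta^*_0\in(0,\infty)$ fixed; $S^{\vec\beta^*}(x_{t+1}=i\mid x_{1:t})=n^t_i/(t+\beta^*_t)$ if $n^t_i>0$ and $\beta^*_t w^t_i/(t+\beta^*_t)$ if $n^t_i=0$; $S^{\vec\beta^*}(x_{1:n})=\prod_{t=0}^{n-1}S^{\vec\beta^*}(x_{t+1}\mid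 x_{1:t})$. Redundancy $R^{\vec\beta^*}_S(x_{1:n}):=\ln\big(n^{-n}\prod_{j\in\mathcal A}n_j^{n_j}\big)-\ln S^{\vec\beta^*}(x_{1:n})$. Natural logarithms. *)

theory Defs
  imports Complex_Main "HOL-Library.Multiset"
begin

text \<open>A sequence x_{1:n} is a list xs of length n; x_t = xs ! (t-1);
  the prefix x_{1:t} is take t xs. Weights are in product form
  w^t_i = u i * v (m_t).\<close>

definition m_t :: "'a list \<Rightarrow> nat \<Rightarrow> nat" where
  "m_t xs t = card (set (take t xs))"

definition n_t :: "'a list \<Rightarrow> nat \<Rightarrow> 'a \<Rightarrow> nat" where
  "n_t xs t i = count_list (take t xs) i"

definition beta_star :: "real \<Rightarrow> 'a list \<Rightarrow> nat \<Rightarrow> real" where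
  "beta_star b0 xs t =
     (if t = 0 then b0 else real (m_t xs t) / ln (real (t + 1) / real (m_t xs t)))"

definition S_cond :: "('a \<Rightarrow> real) \<Rightarrow> (nat \<Rightarrow> real) \<Rightarrow> real \<Rightarrow> 'a list \<Rightarrow> nat \<Rightarrow> 'a \<Rightarrow> real" where
  "S_cond u v b0 xs t i =
     (if n_t xs t i > 0 then real (n_t xs t i) / (real t + beta_star b0 xs t)
      else beta_star b0 xs t * (u i * v (m_t xs t)) / (real t + beta_star b0 xs t))"

definition S_seq :: "('a \<Rightarrow> real) \<Rightarrow> (nat \<Rightarrow> real) \<Rightarrow> real \<Rightarrow> 'a list \<Rightarrow> real" where
  "S_seq u v b0 xs = (\<Prod>t<length xs. S_cond u v b0 xs t (xs ! t))"

definition redundancy :: "('a \<Rightarrow> real) \<Rightarrow> (nat \<Rightarrow> real) \<Rightarrow> real \<Rightarrow> 'a list \<Rightarrow> real" where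
  "redundancy u v b0 xs =
     ln ((\<Prod>j\<in>set xs. real (count_list xs j) ^ count_list xs j) / real (length xs) ^ length xs)
     - ln (S_seq u v b0 xs)"

end

theory Submission
  imports Defs "HOL-Combinatorics.Multiset_Permutations"
begin

text \<open>Swapping an old symbol x (list index t-1) with a new symbol y (index t) only changes
  the two predictive factors at these indices, because every other prefix keeps its multiset.
  With m the number of distinct symbols before position t-1, c the count of x, U the weight of y
  and A, B, C the adaptive parameters at (t-1, m), (t, m), (t, m+1), the two factors change from
  c/(t-1+A) \<cdot> BU/(t+B) to AU/(t-1+A) \<cdot> c/(t+C), a strict decrease iff A(t+B) < B(t+C). The
  latter follows from ln(1+1/t) < 1/t and (t+1)/(m+1) < t/m. The empirical term of the
  redundancy depends only on the multiset, so the redundancy increases strictly. A maximiser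
  over the rearrangements therefore has no such adjacent pair, which forces its first m symbols
  to be distinct.\<close>

lemma S_cond_cong_mset:
  assumes "mset (take k xs) = mset (take k ys)"
  shows "S_cond u v b0 xs k i = S_cond u v b0 ys k i"
proof -
  have "count_list (take k xs) = count_list (take k ys)"
    using assms by (intro ext) (metis count_mset)
  moreover have "set (take k xs) = set (take k ys)"
    using assms by (metis set_mset_mset)
  ultimately show ?thesis
    unfolding S_cond_def beta_star_def n_t_def m_t_def by simp
qed

lemma m_t_le: "m_t xs k \<le> k"
  unfolding m_t_def by (metis card_length length_take min.bounded_iff order.refl le_trans)

lemma m_t_pos:
  assumes "0 < k" "k \<le> length xs"
  shows "0 < m_t xs k"
  using assms unfolding m_t_def by (auto simp: card_gt_0_iff)

lemma beta_star_pos: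
  assumes "b0 > 0" "k \<le> length xs"
  shows "beta_star b0 xs k > 0"
proof (cases "k = 0")
  case False
  then have "real (k + 1) / real (m_t xs k) > 1"
    using m_t_le[of xs k] m_t_pos[of k xs] assms by (simp add: field_simps)
  then show ?thesis
    using False m_t_pos[of k xs] assms by (simp add: beta_star_def)
qed (simp add: beta_star_def assms)

lemma S_cond_pos:
  assumes "\<And>i. u i > 0" and "\<And>k. v k > 0" and "b0 > 0" and "k \<le> length xs"
  shows "S_cond u v b0 xs k i > 0"
  using beta_star_pos[of b0 k xs] assms
  by (auto simp: S_cond_def intro!: divide_pos_pos mult_pos_pos add_nonneg_pos)

lemma S_seq_pos:
  assumes "\<And>i. u i > 0" and "\<And>k. v k > 0" and "b0 > 0"
  shows "S_seq u v b0 xs > 0"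
  unfolding S_seq_def using S_cond_pos[OF assms, of _ xs] by (intro prod_pos) auto

lemma adaptive_beta_swap_ineq:
  fixes m t :: nat and A B C :: real
  assumes m: "1 \<le> m" and t: "m + 1 \<le> t"
  defines "A \<equiv> real m / ln (real t / real m)"
    and "B \<equiv> real m / ln (real (t + 1) / real m)"
    and "C \<equiv> real (m + 1) / ln (real (t + 1) / real (m + 1))"
  shows "A / (t + C) < B / (t + B)"
proof -
  define a where "a = ln (real t / real m)"
  define b where "b = ln (real (t + 1) / real m)"
  define c where "c = ln (real (t + 1) / real (m + 1))"
  have pos: "a > 0" "b > 0" "c > 0"
    using assms by (simp_all add: a_def b_def c_def field_simps)
  have "b - a = ln (1 + 1 / t)"
    using assms by (simp add: a_def b_def ln_div field_simps)
  also have "\<dots> < 1 / t"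
    using t by (intro ln_add_one_self_less_self) simp
  finally have ba: "t * (b - a) < 1"
    using t by (simp add: field_simps)
  have "real (t + 1) / (m + 1) < real t / m"
    using assms by (simp add: field_simps)
  then have "c < a"
    using assms by (simp add: a_def c_def)
  then have "(m + 1) * c < (m + 1) * a"
    by (intro mult_strict_left_mono) auto
  then have "(m + 1) * a / c > m + 1"
    using pos by (simp add: field_simps)
  then have key: "t * b + m < t * a + (m + 1) * a / c"
    using ba by (simp add: algebra_simps)
  have "A * (t + B) = m / (a * b) * (t * b + m)"
    using pos by (simp add: A_def B_def a_def b_def field_simps)
  also have "\<dots> < m / (a * b) * (t * a + (m + 1) * a / c)"
    using key pos m by (intro mult_strict_left_mono) auto
  also have "\<dots> = B * (t + C)"
    using pos by (simp add: B_def C_def b_def c_def field_simps)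
  finally have "A * (t + B) < B * (t + C)" .
  moreover have "t + B > 0" "t + C > 0"
    using pos m unfolding B_def C_def b_def[symmetric] c_def[symmetric]
    by (auto intro!: add_nonneg_pos divide_pos_pos)
  ultimately show ?thesis
    by (simp add: field_simps)
qed

lemma S_seq_split_adjacent:
  assumes "0 < t" "t < length zs"
  shows "S_seq u v b0 zs = S_cond u v b0 zs (t - 1) (zs ! (t - 1)) * S_cond u v b0 zs t (zs ! t)
    * (\<Prod>k\<in>{..<length zs} - {t - 1, t}. S_cond u v b0 zs k (zs ! k))"
proof -
  have "t - 1 \<in> {..<length zs}" "t \<in> {..<length zs} - {t - 1}"
    using assms by auto
  moreover have "{..<length zs} - {t - 1, t} = {..<length zs} - {t - 1} - {t}"
    by auto
  ultimately show ?thesis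
    unfolding S_seq_def
    using prod.remove[of "{..<length zs}" "t - 1" "\<lambda>k. S_cond u v b0 zs k (zs ! k)"]
      prod.remove[of "{..<length zs} - {t - 1}" t "\<lambda>k. S_cond u v b0 zs k (zs ! k)"]
    by (simp add: mult.assoc)
qed

lemma S_seq_adjacent_swap:
  assumes "0 < t" "t < length xs"
  defines "ys \<equiv> xs[t - 1 := xs ! t, t := xs ! (t - 1)]"
  shows "S_seq u v b0 ys = S_cond u v b0 ys (t - 1) (xs ! t) * S_cond u v b0 ys t (xs ! (t - 1))
    * (\<Prod>k\<in>{..<length xs} - {t - 1, t}. S_cond u v b0 xs k (xs ! k))"
proof -
  have other: "S_cond u v b0 ys k (ys ! k) = S_cond u v b0 xs k (xs ! k)"
    if k: "k \<notin> {t - 1, t}" for k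
  proof -
    have "mset (take k ys) = mset (take k xs)"
    proof (cases "k < t")
      case True
      then show ?thesis
        using k by (simp add: ys_def)
    next
      case False
      then have "t < k"
        using k by auto
      then have "take k ys = (take k xs)[t - 1 := take k xs ! t, t := take k xs ! (t - 1)]"
        using k by (simp add: ys_def take_update_swap)
      also have "mset \<dots> = mset (take k xs)"
        using \<open>t < k\<close> assms(2) by (intro mset_swap) auto
      finally show ?thesis .
    qed
    moreover have "ys ! k = xs ! k"
      using k by (simp add: ys_def)
    ultimately show ?thesis
      by (metis S_cond_cong_mset)
  qed
  have "(\<Prod>k\<in>{..<length xs} - {t - 1, t}. S_cond u v b0 ys k (ys ! k))
      = (\<Prod>k\<in>{..<length xs} - {t - 1, t}. S_cond u v b0 xs k (xs ! k))"
    using other by (intro prod.cong) auto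
  moreover have "ys ! (t - 1) = xs ! t" "ys ! t = xs ! (t - 1)" "length ys = length xs"
    using assms(1,2) by (simp_all add: ys_def nth_list_update)
  ultimately show ?thesis
    using S_seq_split_adjacent[of t ys] assms(1,2) by simp
qed

lemma take_adjacent_swap:
  assumes "0 < t" "t < length xs"
  defines "ys \<equiv> xs[t - 1 := xs ! t, t := xs ! (t - 1)]"
  shows "take (t - 1) ys = take (t - 1) xs"
    and "take t xs = take (t - 1) xs @ [xs ! (t - 1)]"
    and "take t ys = take (t - 1) xs @ [xs ! t]"
proof -
  show "take t xs = take (t - 1) xs @ [xs ! (t - 1)]"
    using assms take_Suc_conv_app_nth[of "t - 1" xs] by simp
  then show "take t ys = take (t - 1) xs @ [xs ! t]"
    using assms by (simp add: ys_def take_update_swap list_update_append)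
qed (simp add: ys_def)

lemma S_seq_swap_old_new_less:
  assumes u_pos: "\<And>i. u i > 0" and v_pos: "\<And>k. v k > 0" and b0: "b0 > 0"
    and t: "2 \<le> t" "t < length xs"
    and old: "xs ! (t - 1) \<in> set (take (t - 1) xs)"
    and new: "xs ! t \<notin> set (take t xs)"
  shows "S_seq u v b0 (xs[t - 1 := xs ! t, t := xs ! (t - 1)]) < S_seq u v b0 xs"
proof -
  define ys where "ys = xs[t - 1 := xs ! t, t := xs ! (t - 1)]"
  define p where "p = take (t - 1) xs"
  define x where "x = xs ! (t - 1)"
  define y where "y = xs ! t"
  have tp: "take (t - 1) ys = p" and tx: "take t xs = p @ [x]" and ty: "take t ys = p @ [y]"
    using take_adjacent_swap[of t xs] t by (simp_all add: ys_def p_def x_def y_def)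
  have xp: "x \<in> set p" and yp: "y \<notin> set p" and "y \<noteq> x"
    using old new tx by (auto simp: p_def x_def y_def)
  define m where "m = card (set p)"
  define c where "c = count_list p x"
  define U where "U = u y * v m"
  have m: "1 \<le> m" "m + 1 \<le> t"
    using xp card_length[of p] t by (auto simp: m_def p_def Suc_le_eq card_gt_0_iff)
  have "c > 0"
    using xp by (metis c_def count_list_0_iff gr0I)
  have "count_list p y = 0" "U > 0"
    using yp u_pos v_pos by (auto simp: U_def count_list_0_iff)
  define Q where "Q = (\<Prod>k\<in>{..<length xs} - {t - 1, t}. S_cond u v b0 xs k (xs ! k))"
  have "Q > 0"
    unfolding Q_def using S_cond_pos[OF u_pos v_pos b0, of _ xs] by (intro prod_pos) auto
  have "m_t xs (t - 1) = m" and "m_t ys (t - 1) = m" and "m_t xs t = m" and "m_t ys t = m + 1"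
    using tp tx ty xp yp by (simp_all add: m_t_def m_def p_def insert_absorb)
  moreover define A where "A = real m / ln (real t / real m)"
  moreover define B where "B = real m / ln (real (t + 1) / real m)"
  moreover define C where "C = real (m + 1) / ln (real (t + 1) / real (m + 1))"
  ultimately have beta: "beta_star b0 xs (t - 1) = A" "beta_star b0 ys (t - 1) = A"
      "beta_star b0 xs t = B" "beta_star b0 ys t = C"
    using t by (simp_all add: beta_star_def)
  have "A > 0"
    using beta_star_pos[OF b0, of "t - 1" xs] beta t by simp
  have xs_factors: "S_cond u v b0 xs (t - 1) x = c / (real (t - 1) + A)"
      "S_cond u v b0 xs t y = B * U / (t + B)"
    using beta tx \<open>m_t xs t = m\<close> \<open>c > 0\<close> \<open>count_list p y = 0\<close> \<open>y \<noteq> x\<close>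
    by (simp_all add: S_cond_def n_t_def c_def U_def p_def)
  have ys_factors: "S_cond u v b0 ys (t - 1) y = A * U / (real (t - 1) + A)"
      "S_cond u v b0 ys t x = c / (t + C)"
    using beta tp ty \<open>m_t ys (t - 1) = m\<close> \<open>c > 0\<close> \<open>count_list p y = 0\<close> \<open>y \<noteq> x\<close>
    by (simp_all add: S_cond_def n_t_def c_def U_def)
  have "S_seq u v b0 ys = c * U / (real (t - 1) + A) * (A / (t + C)) * Q"
    using S_seq_adjacent_swap[of t xs u v b0] t ys_factors
    by (simp add: ys_def x_def y_def Q_def)
  also have "\<dots> < c * U / (real (t - 1) + A) * (B / (t + B)) * Q"
    using adaptive_beta_swap_ineq[OF m] \<open>Q > 0\<close> \<open>c > 0\<close> \<open>U > 0\<close> \<open>A > 0\<close>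
    by (intro mult_strict_right_mono mult_strict_left_mono) (auto simp: A_def B_def C_def)
  also have "\<dots> = S_seq u v b0 xs"
    using S_seq_split_adjacent[of t xs u v b0] t xs_factors
    by (simp add: x_def y_def Q_def)
  finally show ?thesis
    by (simp add: ys_def)
qed

lemma redundancy_less_of_S_seq_less:
  assumes "mset ys = mset xs" and "0 < S_seq u v b0 ys" and "S_seq u v b0 ys < S_seq u v b0 xs"
  shows "redundancy u v b0 xs < redundancy u v b0 ys"
proof -
  have "set ys = set xs" "length ys = length xs"
    using assms(1) by (metis set_mset_mset, metis size_mset)
  moreover have "count_list ys = count_list xs"
    using assms(1) by (intro ext) (metis count_mset)
  ultimately show ?thesis
    using assms(2,3) by (simp add: redundancy_def)
qed

lemma redundancy_swap_old_new_less:
  assumes u_pos: "\<And>i. u i > 0" and v_pos: "\<And>k. v k > 0" and b0: "b0 > 0"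
    and t: "2 \<le> t" "t \<le> length xs - 1"
    and old: "xs ! (t - 1) \<in> set (take (t - 1) xs)"
    and new: "xs ! t \<notin> set (take t xs)"
  shows "redundancy u v b0 xs < redundancy u v b0 (xs[t - 1 := xs ! t, t := xs ! (t - 1)])"
proof (rule redundancy_less_of_S_seq_less)
  show "mset (xs[t - 1 := xs ! t, t := xs ! (t - 1)]) = mset xs"
    using t by (intro mset_swap) auto
  show "0 < S_seq u v b0 (xs[t - 1 := xs ! t, t := xs ! (t - 1)])"
    by (rule S_seq_pos[OF u_pos v_pos b0])
  show "S_seq u v b0 (xs[t - 1 := xs ! t, t := xs ! (t - 1)]) < S_seq u v b0 xs"
    using t by (intro S_seq_swap_old_new_less[OF u_pos v_pos b0 _ _ old new]) auto
qed

lemma distinct_take_if_no_repeat: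
  assumes "\<And>j. j < k \<Longrightarrow> zs ! j \<notin> set (take j zs)" and "k \<le> length zs"
  shows "distinct (take k zs)"
  using assms by (induction k) (auto simp: take_Suc_conv_app_nth)

lemma set_eq_take_if_repeats_from:
  assumes "\<And>j. k \<le> j \<Longrightarrow> j < length zs \<Longrightarrow> zs ! j \<in> set (take j zs)"
  shows "set zs = set (take k zs)"
proof -
  have "set (take (k + d) zs) = set (take k zs)" for d
  proof (induction d)
    case (Suc d)
    show ?case
    proof (cases "k + d < length zs")
      case True
      then have "take (k + Suc d) zs = take (k + d) zs @ [zs ! (k + d)]"
        by (simp add: take_Suc_conv_app_nth)
      then show ?thesis
        using Suc assms[of "k + d"] True by auto
    next
      case False
      then show ?thesis
        using Suc by simp
    qed
  qed simp
  from this[of "length zs"] show ?thesis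
    by simp
qed

lemma adjacent_old_new_pair_exists:
  assumes "\<not> distinct (take (card (set zs)) zs)"
  obtains t where "2 \<le> t" "t \<le> length zs - 1"
    "zs ! (t - 1) \<in> set (take (t - 1) zs)" "zs ! t \<notin> set (take t zs)"
proof -
  note pair = that
  have "\<exists>k. k < length zs \<and> zs ! k \<in> set (take k zs)"
    using assms distinct_take_if_no_repeat[of "length zs" zs] distinct_take by fastforce
  define k where "k = (LEAST k. k < length zs \<and> zs ! k \<in> set (take k zs))"
  have k: "k < length zs" "zs ! k \<in> set (take k zs)"
    using LeastI_ex[OF \<open>\<exists>k. _\<close>] by (simp_all add: k_def)
  have first: "zs ! j \<notin> set (take j zs)" if "j < k" for j
    using not_less_Least[OF that[unfolded k_def]] k that by auto
  have "1 \<le> k"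
    using k by (cases k) auto
  have distinct: "distinct (take k zs)"
    using first k by (intro distinct_take_if_no_repeat) auto
  show ?thesis
  proof (rule ccontr)
    assume no_pair: "\<not> thesis"
    have "zs ! (k + d) \<in> set (take (k + d) zs)" if "k + d < length zs" for d
      using that
    proof (induction d)
      case (Suc d)
      then have "k + Suc d \<le> length zs - 1" "zs ! (k + Suc d - 1) \<in> set (take (k + Suc d - 1) zs)"
        by simp_all
      then show ?case
        using pair[of "k + Suc d"] no_pair \<open>1 \<le> k\<close> by auto
    qed (use k in simp)
    then have "set zs = set (take k zs)"
      by (intro set_eq_take_if_repeats_from) (metis le_add_diff_inverse)
    then have "card (set zs) = k"
      using distinct k by (simp add: distinct_card)
    then show False
      using assms distinct by simp
  qed
qed

lemma redundancy_maximiser_first_distinct: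
  assumes u_pos: "\<And>i. u i > 0" and v_pos: "\<And>k. v k > 0" and b0: "b0 > 0"
  obtains ys where "mset ys = mset xs" "distinct (take (card (set xs)) ys)"
    "\<And>zs. mset zs = mset xs \<Longrightarrow> redundancy u v b0 zs \<le> redundancy u v b0 ys"
proof -
  define P where "P = permutations_of_multiset (mset xs)"
  define R where "R = redundancy u v b0"
  have "finite (R ` P)" "R ` P \<noteq> {}"
    by (simp_all add: P_def)
  then obtain ys where "ys \<in> P" "R ys = Max (R ` P)"
    by (metis Max_in imageE)
  then have ys: "mset ys = mset xs" and max: "\<And>zs. mset zs = mset xs \<Longrightarrow> R zs \<le> R ys"
    using \<open>finite (R ` P)\<close> by (auto simp: P_def permutations_of_multiset_def)
  have "distinct (take (card (set ys)) ys)"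
  proof (rule ccontr)
    assume "\<not> distinct (take (card (set ys)) ys)"
    then obtain t where "2 \<le> t" "t \<le> length ys - 1"
      "ys ! (t - 1) \<in> set (take (t - 1) ys)" "ys ! t \<notin> set (take t ys)"
      by (rule adjacent_old_new_pair_exists)
    moreover from this have "mset (ys[t - 1 := ys ! t, t := ys ! (t - 1)]) = mset xs"
      using ys by (subst mset_swap) auto
    ultimately show False
      using max redundancy_swap_old_new_less[where u = u and v = v, OF u_pos v_pos b0] unfolding R_def
      by (meson not_le)
  qed
  then show ?thesis
    using that ys max by (metis R_def set_mset_mset)
qed

theorem mainTheorem6:
  fixes u :: "'a::finite \<Rightarrow> real" and v :: "nat \<Rightarrow> real" and b0 :: real
  assumes u_pos: "\<And>i. u i > 0"
    and v_pos: "\<And>k. v k > 0"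
    and weights: "\<And>A :: 'a set. (\<Sum>k\<in>UNIV - A. u k * v (card A)) \<le> 1"
    and b0_pos: "b0 > 0"
  shows "(\<forall>(xs :: 'a list) t. 2 \<le> t \<and> t \<le> length xs - 1
            \<and> xs ! (t - 1) \<in> set (take (t - 1) xs)
            \<and> xs ! t \<notin> set (take t xs)
          \<longrightarrow> redundancy u v b0 (xs[t - 1 := xs ! t, t := xs ! (t - 1)])
              > redundancy u v b0 xs)
       \<and> (\<forall>xs :: 'a list. \<exists>ys. mset ys = mset xs
            \<and> distinct (take (card (set xs)) ys)
            \<and> (\<forall>zs. mset zs = mset xs \<longrightarrow> redundancy u v b0 zs \<le> redundancy u v b0 ys))"
proof (intro conjI allI impI)
  show "redundancy u v b0 xs < redundancy u v b0 (xs[t - 1 := xs ! t, t := xs ! (t - 1)])"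
    if "2 \<le> t \<and> t \<le> length xs - 1 \<and> xs ! (t - 1) \<in> set (take (t - 1) xs)
        \<and> xs ! t \<notin> set (take t xs)" for xs :: "'a list" and t
    using that by (intro redundancy_swap_old_new_less[where u = u and v = v, OF u_pos v_pos b0_pos]) auto
  show "\<exists>ys. mset ys = mset xs \<and> distinct (take (card (set xs)) ys)
      \<and> (\<forall>zs. mset zs = mset xs \<longrightarrow> redundancy u v b0 zs \<le> redundancy u v b0 ys)"
    for xs :: "'a list"
    by (rule redundancy_maximiser_first_distinct[where u = u and v = v and xs = xs, OF u_pos v_pos b0_pos]) blast
qed

end
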